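(* For every integer $d \ge 2$ there exists a constant $C(d) > 0$ such that for every Coxeter polytope $P$ of finite volume in $\mathbb H^d$ we have \[ \operatorname{vol}(P_{\le 2}) \ge C(d)\operatorname{vol}(P), \] where $P_{\le 2} = \{x \in P : \exists \gamma \in \Gamma_P,\ d(x,\gamma x) \le 1\}$.
   Context: A hyperplane in $\mathbb H^d$ is a complete totally geodesic subspace of codimension one. A polytope is a finite-volume region of $\mathbb H^d$ delimited by finitely many hyperplanes. A polytope is Coxeter if each dihedral angle between two adjacent faces is of the form $\pi/m$ for some integer $m \ge 2$. $\Gamma_P$ denotes the subgroup of $\mathrm{Isom}(\mathbb H^d)$ generated by the reflections in the codimension-one faces of $P$; it is discrete with fundamental domain $P$. For $R>0$, $P_{\le R} = \{x \in P : \exists \gamma\in\Gamma_P,\ d(x,\gamma x)\le R/2\}$; equivalently, the set of points of $P$ at distance at most $R/2$ from $\partial P$. $\operatorname{vol}$ is the hyperbolic $d$-dimensional volume. *)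

theory Defs
  imports "HOL-Analysis.Analysis"
begin

text \<open>Hyperbolic space \<open>\<bbbH>^d\<close>, d = CARD('n), in the Beltrami--Klein projective model:
  points are the open unit ball of \<open>real^'n\<close>; a point x corresponds to the
  hyperboloid point proportional to (x,1) in Minkowski space \<open>\<real>^{d,1}\<close>.\<close>

definition kball :: "(real^'n) set" where
  "kball = ball 0 1"

definition hdist :: "real^'n \<Rightarrow> real^'n \<Rightarrow> real" where
  "hdist x y = arcosh ((1 - x \<bullet> y) / sqrt ((1 - (norm x)\<^sup>2) * (1 - (norm y)\<^sup>2)))"

definition hvol_measure :: "(real^'n) measure" where
  "hvol_measure = density lborel
     (\<lambda>x. indicator kball x * ennreal ((1 - (norm x)\<^sup>2) powr (- (real CARD('n) + 1) / 2)))"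

definition hvol :: "(real^'n) set \<Rightarrow> ennreal" where
  "hvol S = emeasure hvol_measure S"

text \<open>A pair (a,b) describes the hyperbolic hyperplane \<open>{x \<in> kball. a\<bullet>x = b}\<close>
  (nonempty iff \<open>|b| < |a|\<close>), i.e. the Minkowski-orthogonal complement of the spacelike
  vector e = (a,b) with Lorentz form \<open>\<langle>(a,b),(a',b')\<rangle> = a\<bullet>a' - b b'\<close>; the closed half-space
  \<open>{x \<in> kball. a\<bullet>x \<le> b}\<close> has e as outward normal.\<close>
definition hyp_pair :: "real^'n \<Rightarrow> real \<Rightarrow> bool" where
  "hyp_pair a b \<longleftrightarrow> a \<noteq> 0 \<and> \<bar>b\<bar> < norm a"

definition lorentz :: "real^'n \<Rightarrow> real \<Rightarrow> real^'n \<Rightarrow> real \<Rightarrow> real" where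
  "lorentz a b a' b' = a \<bullet> a' - b * b'"

text \<open>Hyperbolic reflection in the hyperplane of (a,b), written in Klein coordinates
  (Minkowski reflection \<open>X \<mapsto> X - 2\<langle>X,e\<rangle>/\<langle>e,e\<rangle> e\<close>, then projectivised).\<close>
definition hrefl :: "real^'n \<Rightarrow> real \<Rightarrow> real^'n \<Rightarrow> real^'n" where
  "hrefl a b x = (let c = 2 * (a \<bullet> x - b) / lorentz a b a b
                  in (1 / (1 - c * b)) *\<^sub>R (x - c *\<^sub>R a))"

definition hpolytope :: "(real^'n) set \<Rightarrow> bool" where
  "hpolytope P \<longleftrightarrow>
     (\<exists>H. finite H \<and> (\<forall>(a,b)\<in>H. hyp_pair a b) \<and>
          P = {x \<in> kball. \<forall>(a,b)\<in>H. a \<bullet> x \<le> b}) \<and>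
     interior P \<noteq> {} \<and> hvol P < \<infinity>"

definition hface :: "(real^'n) set \<Rightarrow> real^'n \<Rightarrow> real \<Rightarrow> (real^'n) set" where
  "hface P a b = {x \<in> P. a \<bullet> x = b}"

definition facet_pair :: "(real^'n) set \<Rightarrow> real^'n \<Rightarrow> real \<Rightarrow> bool" where
  "facet_pair P a b \<longleftrightarrow> hyp_pair a b \<and> (\<forall>x\<in>P. a \<bullet> x \<le> b) \<and>
     aff_dim (hface P a b) = int CARD('n) - 1"

definition dihedral_angle :: "real^'n \<Rightarrow> real \<Rightarrow> real^'n \<Rightarrow> real \<Rightarrow> real" where
  "dihedral_angle a b a' b' =
     arccos (- lorentz a b a' b' / (sqrt (lorentz a b a b) * sqrt (lorentz a' b' a' b')))"

definition coxeter_polytope :: "(real^'n) set \<Rightarrow> bool" where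
  "coxeter_polytope P \<longleftrightarrow> hpolytope P \<and>
     (\<forall>a b a' b'. facet_pair P a b \<and> facet_pair P a' b' \<and>
        aff_dim (hface P a b \<inter> hface P a' b') = int CARD('n) - 2 \<longrightarrow>
        (\<exists>m::nat. m \<ge> 2 \<and> dihedral_angle a b a' b' = pi / real m))"

text \<open>\<open>\<Gamma>_P\<close>: the group generated by the reflections in the codimension-one faces of P
  (reflections are involutions, so the generated monoid is the group).\<close>
inductive_set refl_group :: "(real^'n) set \<Rightarrow> (real^'n \<Rightarrow> real^'n) set" for P where
  id_in: "id \<in> refl_group P"
| step: "facet_pair P a b \<Longrightarrow> g \<in> refl_group P \<Longrightarrow> hrefl a b \<circ> g \<in> refl_group P"

definition P_le :: "(real^'n) set \<Rightarrow> real \<Rightarrow> (real^'n) set" where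
  "P_le P R = {x \<in> P. \<exists>\<gamma>\<in>refl_group P. (\<exists>y\<in>kball. \<gamma> y \<noteq> y) \<and> hdist x (\<gamma> x) \<le> R / 2}"

end

theory Submission
  imports Defs
begin

text \<open>Slice P by the parallel lines \<open>v + \<real> u\<close> for a fixed coordinate direction u. In the
  Klein model each such line is a geodesic, and P meets it in a single segment whose endpoints
  lie on facets of P. A point of the segment within hyperbolic distance 1/2 of an endpoint is moved
  by at most 1 by the reflection in that facet, so it lies in \<open>P_{\<le>2}\<close>. In arc length s the
  volume density along the line is proportional to \<open>cosh\<^bsup>d-1\<^esup> s\<close>, and for this weight the two
  end pieces of length 1/2 of any interval carry a fixed fraction of its mass. Integrating over
  the lines gives the bound.\<close>

section \<open>Reflections in the Klein model\<close>

lemma lorentz_self_pos: "hyp_pair a b \<Longrightarrow> 0 < lorentz a b a b"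
proof -
  assume "hyp_pair a b"
  hence "b\<^sup>2 < (norm a)\<^sup>2" by (simp add: hyp_pair_def abs_less_iff power2_strict_mono abs_le_square_iff)
  thus ?thesis by (simp add: lorentz_def power2_eq_square flip: power2_norm_eq_inner)
qed

lemma one_minus_norm_sq_pos: "norm (x :: 'a::real_normed_vector) < 1 \<Longrightarrow> 0 < 1 - (norm x)\<^sup>2"
  by (simp add: abs_square_less_1)

lemma hdist_self: "norm x < 1 \<Longrightarrow> hdist x x = 0"
  using one_minus_norm_sq_pos[of x]
  by (simp add: hdist_def power2_norm_eq_inner real_sqrt_mult_self flip: power2_eq_square)

lemma hrefl_denominator_pos:
  fixes x a :: "real^'n"
  assumes x: "norm x < 1" and ab: "hyp_pair a b"
  shows "0 < 1 - 2 * (a \<bullet> x - b) / lorentz a b a b * b"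
proof -
  define N where "N = lorentz a b a b"
  have N: "N > 0" using lorentz_self_pos[OF ab] by (simp add: N_def)
  have "(1 - 2 * (a \<bullet> x - b) / N * b) * N = a \<bullet> a + b\<^sup>2 - 2 * b * (a \<bullet> x)"
    using N by (simp add: N_def lorentz_def field_simps power2_eq_square)
  also have "\<dots> = (norm (a - b *\<^sub>R x))\<^sup>2 + b\<^sup>2 * (1 - (norm x)\<^sup>2)"
    unfolding power2_norm_eq_inner by (simp add: inner_simps inner_commute power2_eq_square algebra_simps)
  also have "\<dots> > 0"
  proof (cases "b = 0")
    case True thus ?thesis using ab by (simp add: hyp_pair_def)
  next
    case False thus ?thesis using one_minus_norm_sq_pos[OF x]
      by (intro add_nonneg_pos) auto
  qed
  finally show ?thesis using N by (simp add: N_def zero_less_mult_iff)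
qed

lemma hdist_hrefl:
  fixes x a :: "real^'n"
  assumes x: "norm x < 1" and ab: "hyp_pair a b"
  shows "hdist x (hrefl a b x)
    = arcosh (1 + 2 * (a \<bullet> x - b)\<^sup>2 / (lorentz a b a b * (1 - (norm x)\<^sup>2)))"
proof -
  define N where "N = lorentz a b a b"
  define p where "p = a \<bullet> x - b"
  define c where "c = 2 * p / N"
  define den where "den = 1 - c * b"
  define X2 where "X2 = 1 - (norm x)\<^sup>2"
  have N: "N > 0" using lorentz_self_pos[OF ab] by (simp add: N_def)
  have den: "den > 0" using hrefl_denominator_pos[OF x ab] by (simp add: den_def c_def p_def N_def)
  have X2: "X2 > 0" using one_minus_norm_sq_pos[OF x] by (simp add: X2_def)
  have cN: "c * N = 2 * p" using N by (simp add: c_def)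
  have y: "hrefl a b x = (1 / den) *\<^sub>R (x - c *\<^sub>R a)"
    by (simp add: hrefl_def c_def den_def p_def N_def Let_def)
  have "x \<bullet> hrefl a b x = (x \<bullet> x - c * (a \<bullet> x)) / den"
    by (simp add: y inner_simps inner_commute)
  moreover have "den - (x \<bullet> x - c * (a \<bullet> x)) = X2 + c * p"
    by (simp add: den_def X2_def p_def power2_norm_eq_inner algebra_simps)
  ultimately have num: "1 - x \<bullet> hrefl a b x = (X2 + c * p) / den"
    using den by (simp add: field_simps)
  have "den\<^sup>2 - (norm (x - c *\<^sub>R a))\<^sup>2 = X2 + 2 * c * p - c * (c * N)"
    unfolding X2_def power2_norm_eq_inner
    by (simp add: inner_simps inner_commute power2_eq_square den_def p_def N_def lorentz_def algebra_simps)
  also have "\<dots> = X2" using cN by simp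
  finally have X2_eq: "X2 = den\<^sup>2 - (norm (x - c *\<^sub>R a))\<^sup>2" ..
  moreover have "(norm (hrefl a b x))\<^sup>2 = (norm (x - c *\<^sub>R a))\<^sup>2 / den\<^sup>2"
    using den by (simp add: y power_divide)
  ultimately have "1 - (norm (hrefl a b x))\<^sup>2 = X2 / den\<^sup>2"
    using den by (simp add: X2_eq field_simps)
  hence "sqrt (X2 * (1 - (norm (hrefl a b x))\<^sup>2)) = X2 / den"
    using den X2 by (simp add: real_sqrt_divide real_sqrt_mult power2_eq_square)
  hence "(1 - x \<bullet> hrefl a b x) / sqrt (X2 * (1 - (norm (hrefl a b x))\<^sup>2)) = 1 + c * p / X2"
    using den X2 by (simp add: num field_simps)
  also have "c * p / X2 = 2 * p\<^sup>2 / (N * X2)" by (simp add: c_def power2_eq_square)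
  finally show ?thesis by (simp add: hdist_def X2_def p_def N_def)
qed

lemma hrefl_moves_point:
  fixes a :: "real^'n"
  assumes ab: "hyp_pair a b"
  shows "\<exists>y\<in>kball. hrefl a b y \<noteq> y"
proof -
  have a: "a \<noteq> 0" using ab by (simp add: hyp_pair_def)
  obtain y :: "real^'n" where y: "norm y < 1" "a \<bullet> y \<noteq> b"
  proof (cases "b = 0")
    case True
    have "norm ((1/2) *\<^sub>R sgn a) < 1" "a \<bullet> ((1/2) *\<^sub>R sgn a) \<noteq> b"
      using a True by (simp_all add: norm_sgn sgn_div_norm)
    thus ?thesis by (rule that)
  qed (use that[of 0] in simp)
  have "1 < 1 + 2 * (a \<bullet> y - b)\<^sup>2 / (lorentz a b a b * (1 - (norm y)\<^sup>2))"
    using y lorentz_self_pos[OF ab] one_minus_norm_sq_pos[OF y(1)] by simp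
  hence "hdist y (hrefl a b y) > 0"
    using y(2) lorentz_self_pos[OF ab] one_minus_norm_sq_pos[OF y(1)]
    unfolding hdist_hrefl[OF y(1) ab] by simp
  hence "hdist y (hrefl a b y) \<noteq> hdist y y"
    using hdist_self[OF y(1)] by simp
  thus ?thesis using y(1) unfolding kball_def by (metis mem_ball_0)
qed

text \<open>In Minkowski terms this says \<open>sinh\<^sup>2\<close> of the distance from x to the hyperplane of (a,b)
  is at most \<open>sinh\<^sup>2\<close> of the distance from x to any point z of that hyperplane.\<close>

lemma lorentz_hyperplane_ineq:
  fixes x z a :: "real^'n"
  assumes z: "norm z < 1" and ab: "hyp_pair a b" and az: "a \<bullet> z = b"
  shows "(a \<bullet> x - b)\<^sup>2 * (1 - z \<bullet> z)
    \<le> lorentz a b a b * ((1 - x \<bullet> z)\<^sup>2 - (1 - x \<bullet> x) * (1 - z \<bullet> z))"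
proof -
  define N where "N = lorentz a b a b"
  define Z2 where "Z2 = 1 - z \<bullet> z"
  define m where "m = 1 - x \<bullet> z"
  define p where "p = a \<bullet> x - b"
  define X2 where "X2 = 1 - x \<bullet> x"
  have N: "N > 0" using lorentz_self_pos[OF ab] by (simp add: N_def)
  have Z2: "Z2 > 0" using one_minus_norm_sq_pos[OF z] by (simp add: Z2_def power2_norm_eq_inner)
  define l where "l = m / Z2"
  define t where "t = p / N"
  have lZ: "l * Z2 = m" using Z2 by (simp add: l_def)
  have tN: "t * N = p" using N by (simp add: t_def)
  \<comment> \<open>Project x onto the Minkowski complement of \<open>(z,1)\<close> and \<open>(a,b)\<close>; the remainder
    \<open>(w, \<omega>)\<close> satisfies \<open>\<omega>\<^sup>2 \<le> w \<bullet> w\<close> because \<open>w \<bullet> z = \<omega>\<close> and \<open>norm z < 1\<close>.\<close>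
  define w where "w = x - l *\<^sub>R z - t *\<^sub>R a"
  define \<omega> where "\<omega> = 1 - l - t * b"
  have "w \<bullet> z = x \<bullet> z - l * (z \<bullet> z) - t * b"
    by (simp add: w_def inner_simps az inner_commute)
  also have "\<dots> = \<omega>" using lZ by (simp add: \<omega>_def Z2_def m_def algebra_simps)
  finally have "\<bar>\<omega>\<bar> \<le> norm w * norm z" using Cauchy_Schwarz_ineq2[of w z] by simp
  also have "\<dots> \<le> norm w" using z by (simp add: mult_left_le)
  finally have "\<omega>\<^sup>2 \<le> w \<bullet> w"
    by (metis abs_le_square_iff abs_norm_cancel power2_norm_eq_inner)
  moreover have "w \<bullet> w - \<omega>\<^sup>2 = - X2 + 2 * l * m - l * (l * Z2) - 2 * t * p + t * (t * N)"
    by (simp add: w_def \<omega>_def X2_def m_def Z2_def p_def N_def lorentz_def az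
        inner_simps inner_commute power2_eq_square algebra_simps)
  moreover have "l * (l * Z2) = l * m" "t * (t * N) = t * p" by (simp_all add: lZ tN)
  ultimately have "0 \<le> - X2 + l * m - t * p" by linarith
  hence "0 \<le> (- X2 + l * m - t * p) * (N * Z2)" using N Z2 by simp
  also have "\<dots> = - X2 * N * Z2 + (l * Z2) * m * N - (t * N) * p * Z2" by (simp add: algebra_simps)
  also have "\<dots> = - X2 * N * Z2 + m * m * N - p * p * Z2" by (simp only: lZ tN)
  finally have "p * p * Z2 \<le> N * (m * m - X2 * Z2)" by (simp add: algebra_simps)
  thus ?thesis by (simp add: N_def p_def m_def X2_def Z2_def power2_eq_square)
qed

lemma hdist_hrefl_le:
  fixes x z a :: "real^'n"
  assumes x: "norm x < 1" and z: "norm z < 1" and ab: "hyp_pair a b" and az: "a \<bullet> z = b"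
  shows "hdist x (hrefl a b x) \<le> 2 * hdist x z"
proof -
  define N where "N = lorentz a b a b"
  define p where "p = a \<bullet> x - b"
  define X2 where "X2 = 1 - (norm x)\<^sup>2"
  define Z2 where "Z2 = 1 - (norm z)\<^sup>2"
  define m where "m = 1 - x \<bullet> z"
  define \<rho> where "\<rho> = m / sqrt (X2 * Z2)"
  have N: "N > 0" using lorentz_self_pos[OF ab] by (simp add: N_def)
  have X2: "X2 > 0" using one_minus_norm_sq_pos[OF x] by (simp add: X2_def)
  have Z2: "Z2 > 0" using one_minus_norm_sq_pos[OF z] by (simp add: Z2_def)
  have "x \<bullet> z \<le> norm x * norm z" by (rule norm_cauchy_schwarz)
  also have "\<dots> \<le> norm z" using x by (intro mult_left_le_one_le) auto
  also have "\<dots> < 1" by (fact z)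
  finally have m: "m > 0" by (simp add: m_def)
  have key: "p\<^sup>2 * Z2 \<le> N * (m\<^sup>2 - X2 * Z2)"
    using lorentz_hyperplane_ineq[OF z ab az, of x]
    by (simp add: N_def p_def m_def X2_def Z2_def power2_norm_eq_inner)
  have \<rho>2: "\<rho>\<^sup>2 = m\<^sup>2 / (X2 * Z2)" using X2 Z2 by (simp add: \<rho>_def power_divide)
  have "0 \<le> N * (m\<^sup>2 - X2 * Z2)" using key Z2 by (meson order_trans zero_le_power2 mult_nonneg_nonneg less_imp_le)
  hence "X2 * Z2 \<le> m\<^sup>2" using N by (simp add: zero_le_mult_iff)
  hence "1 \<le> \<rho>\<^sup>2" using X2 Z2 by (simp add: \<rho>2)
  moreover have "\<rho> > 0" using m X2 Z2 by (simp add: \<rho>_def)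
  ultimately have \<rho>: "1 \<le> \<rho>" using power2_le_imp_le[of 1 \<rho>] by simp
  have "p\<^sup>2 / (N * X2) = p\<^sup>2 * Z2 / (N * X2 * Z2)" using Z2 by simp
  also have "\<dots> \<le> N * (m\<^sup>2 - X2 * Z2) / (N * X2 * Z2)"
    using key N X2 Z2 by (intro divide_right_mono) auto
  also have "\<dots> = \<rho>\<^sup>2 - 1" using N X2 Z2 by (simp add: \<rho>2 field_simps)
  finally have "1 + 2 * p\<^sup>2 / (N * X2) \<le> cosh (2 * arcosh \<rho>)"
    using \<rho> by (simp add: cosh_double_cosh)
  moreover have "1 \<le> 1 + 2 * p\<^sup>2 / (N * X2)" using N X2 by simp
  ultimately have "arcosh (1 + 2 * p\<^sup>2 / (N * X2)) \<le> arcosh (cosh (2 * arcosh \<rho>))"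
    using cosh_real_ge_1 by (metis arcosh_less_iff_real not_le)
  also have "\<dots> = 2 * hdist x z" using \<rho> by (simp add: arcosh_cosh_real hdist_def \<rho>_def m_def X2_def Z2_def)
  finally show ?thesis by (simp add: hdist_hrefl[OF x ab] N_def p_def X2_def)
qed

lemma mem_P_le_if_near_facet:
  assumes "x \<in> P" "P \<subseteq> kball" "facet_pair P a b" "z \<in> kball" "a \<bullet> z = b" "4 * hdist x z \<le> R"
  shows "x \<in> P_le P R"
proof -
  have ab: "hyp_pair a b" using assms(3) by (simp add: facet_pair_def)
  have "hdist x (hrefl a b x) \<le> R / 2"
    using hdist_hrefl_le[OF _ _ ab assms(5), of x] assms(1,2,4,6) by (auto simp: kball_def)
  moreover have "hrefl a b \<in> refl_group P"
    using refl_group.step[OF assms(3) refl_group.id_in] by simp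
  ultimately show ?thesis using assms(1) hrefl_moves_point[OF ab] by (auto simp: P_le_def)
qed

section \<open>Geodesic chords\<close>

lemma tanh_artanh_real: "\<bar>u\<bar> < 1 \<Longrightarrow> tanh (artanh u) = (u :: real)"
proof -
  assume u: "\<bar>u\<bar> < 1"
  hence "exp (- 2 * artanh u) = (1 - u) / (1 + u)"
    by (simp add: artanh_def exp_minus abs_less_iff)
  hence "tanh (artanh u) = (1 - (1 - u) / (1 + u)) / (1 + (1 - u) / (1 + u))"
    by (simp only: tanh_real_altdef)
  also have "\<dots> = u" using u by (simp add: abs_less_iff field_simps)
  finally show ?thesis .
qed

lemma one_minus_tanh_sq: "1 - tanh (s::real) ^ 2 = 1 / cosh s ^ 2"
proof -
  have "cosh s \<noteq> 0" using cosh_real_pos[of s] by linarith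
  hence "1 - tanh s ^ 2 = (cosh s ^ 2 - sinh s ^ 2) / cosh s ^ 2"
    by (simp add: tanh_def field_simps power2_eq_square)
  thus ?thesis by (simp add: cosh_square_eq)
qed

text \<open>\<open>chord v u s\<close> is the point at signed hyperbolic arc length s from v on the Klein-model
  geodesic through v in direction u, for a unit vector u orthogonal to v.\<close>

definition chord :: "real^'n \<Rightarrow> real^'n \<Rightarrow> real \<Rightarrow> real^'n" where
  "chord v u s = v + (sqrt (1 - (norm v)\<^sup>2) * tanh s) *\<^sub>R u"

lemma inner_line_points:
  fixes v u :: "real^'n"
  assumes u: "norm u = 1" and vu: "v \<bullet> u = 0"
  shows "(v + y *\<^sub>R u) \<bullet> (v + y' *\<^sub>R u) = (norm v)\<^sup>2 + y * y'"
proof -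
  have "u \<bullet> u = 1" using u by (simp add: power2_norm_eq_inner[symmetric])
  thus ?thesis using vu by (simp add: inner_simps inner_commute power2_norm_eq_inner)
qed

lemma norm_line_point_sq:
  fixes v u :: "real^'n"
  assumes "norm u = 1" and "v \<bullet> u = 0"
  shows "(norm (v + y *\<^sub>R u))\<^sup>2 = (norm v)\<^sup>2 + y\<^sup>2"
  using inner_line_points[OF assms, of y y] by (simp add: dot_square_norm power2_eq_square[symmetric])

lemma line_point_in_kball_iff:
  fixes v u :: "real^'n"
  assumes "norm u = 1" and "v \<bullet> u = 0"
  shows "v + y *\<^sub>R u \<in> kball \<longleftrightarrow> y\<^sup>2 < 1 - (norm v)\<^sup>2"
proof -
  have "v + y *\<^sub>R u \<in> kball \<longleftrightarrow> (norm (v + y *\<^sub>R u))\<^sup>2 < 1"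
    by (simp add: kball_def abs_square_less_1)
  thus ?thesis by (simp add: norm_line_point_sq[OF assms] algebra_simps)
qed

lemma chord_in_kball:
  fixes v u :: "real^'n"
  assumes u: "norm u = 1" and vu: "v \<bullet> u = 0" and v: "norm v < 1"
  shows "chord v u s \<in> kball"
proof -
  have "tanh s ^ 2 < 1" using tanh_real_bounds[of s] by (simp add: abs_square_less_1 abs_less_iff)
  hence "(sqrt (1 - (norm v)\<^sup>2) * tanh s)\<^sup>2 < 1 - (norm v)\<^sup>2"
    using one_minus_norm_sq_pos[OF v] by (simp add: power_mult_distrib)
  thus ?thesis unfolding chord_def by (simp add: line_point_in_kball_iff[OF u vu])
qed

lemma line_point_eq_chord:
  fixes v u :: "real^'n"
  assumes u: "norm u = 1" and vu: "v \<bullet> u = 0" and y: "v + y *\<^sub>R u \<in> kball"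
  shows "v + y *\<^sub>R u = chord v u (artanh (y / sqrt (1 - (norm v)\<^sup>2)))"
proof -
  define a where "a = sqrt (1 - (norm v)\<^sup>2)"
  have "\<bar>y\<bar>\<^sup>2 < 1 - (norm v)\<^sup>2" using y line_point_in_kball_iff[OF u vu] by simp
  hence "\<bar>y\<bar> < a" unfolding a_def by (rule real_less_rsqrt)
  hence "a * tanh (artanh (y / a)) = y" by (simp add: tanh_artanh_real abs_less_iff field_simps)
  thus ?thesis by (simp add: chord_def a_def)
qed

lemma hdist_chord:
  fixes v u :: "real^'n"
  assumes u: "norm u = 1" and vu: "v \<bullet> u = 0" and v: "norm v < 1"
  shows "hdist (chord v u s) (chord v u t) = \<bar>s - t\<bar>"
proof -
  define A where "A = 1 - (norm v)\<^sup>2"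
  have A: "A > 0" using one_minus_norm_sq_pos[OF v] by (simp add: A_def)
  have chord: "chord v u r = v + (sqrt A * tanh r) *\<^sub>R u" for r by (simp add: chord_def A_def)
  have nrm: "1 - (norm (chord v u r))\<^sup>2 = A / cosh r ^ 2" for r
  proof -
    have "1 - (norm (chord v u r))\<^sup>2 = A * (1 - tanh r ^ 2)"
      using A by (simp add: chord norm_line_point_sq[OF u vu] power_mult_distrib A_def algebra_simps)
    thus ?thesis by (simp add: one_minus_tanh_sq)
  qed
  have "chord v u s \<bullet> chord v u t = (norm v)\<^sup>2 + A * (tanh s * tanh t)"
    unfolding chord inner_line_points[OF u vu] using A by (simp add: algebra_simps)
  hence num: "1 - chord v u s \<bullet> chord v u t = A * (1 - tanh s * tanh t)"
    by (simp add: A_def algebra_simps)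
  have den: "sqrt ((1 - (norm (chord v u s))\<^sup>2) * (1 - (norm (chord v u t))\<^sup>2))
      = A / (cosh s * cosh t)"
    using A by (simp add: nrm real_sqrt_divide real_sqrt_mult power_mult_distrib[symmetric]
        flip: power2_eq_square)
  have "(1 - chord v u s \<bullet> chord v u t)
      / sqrt ((1 - (norm (chord v u s))\<^sup>2) * (1 - (norm (chord v u t))\<^sup>2))
    = cosh s * cosh t - sinh s * sinh t"
    unfolding num den using A by (simp add: tanh_def field_simps)
  also have "\<dots> = cosh \<bar>s - t\<bar>" by (simp add: cosh_diff)
  finally have ratio: "(1 - chord v u s \<bullet> chord v u t)
      / sqrt ((1 - (norm (chord v u s))\<^sup>2) * (1 - (norm (chord v u t))\<^sup>2)) = cosh \<bar>s - t\<bar>" .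
  show ?thesis unfolding hdist_def ratio by (rule arcosh_cosh_real) simp
qed

lemma continuous_on_chord: "continuous_on S (chord v u)"
  unfolding chord_def tanh_def by (intro continuous_intros) (simp add: cosh_real_pos[THEN less_imp_neq, symmetric])

section \<open>Polytopes and their facet reflections\<close>

lemma hpolytope_imp_polyhedron:
  fixes P :: "(real^'n) set"
  assumes "hpolytope P"
  obtains Q where "polyhedron Q" "interior Q \<noteq> {}" "P = kball \<inter> Q"
proof -
  obtain H where H: "finite H" "P = {x \<in> kball. \<forall>(a,b)\<in>H. a \<bullet> x \<le> b}" and "interior P \<noteq> {}"
    using assms unfolding hpolytope_def by blast
  define Q where "Q = (\<Inter>(a,b)\<in>H. {x::real^'n. a \<bullet> x \<le> b})"
  have "polyhedron Q" unfolding Q_def using H(1)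
    by (intro polyhedron_Inter) (auto simp: polyhedron_halfspace_le)
  moreover have "P = kball \<inter> Q" using H(2) by (auto simp: Q_def)
  moreover from this have "interior Q \<noteq> {}"
    using \<open>interior P \<noteq> {}\<close> interior_mono[of P Q] by blast
  ultimately show ?thesis using that by blast
qed

lemma supporting_hyperplane_unique:
  fixes a a' x :: "'a::euclidean_space"
  assumes a: "a \<noteq> 0" and a': "a' \<noteq> 0" and e: "e > 0" and x: "a \<bullet> x = b" "a' \<bullet> x = b'"
    and disc: "ball x e \<inter> {y. a \<bullet> y = b} \<subseteq> {y. a' \<bullet> y \<le> b'}"
  obtains t where "t \<noteq> 0" "a' = t *\<^sub>R a" "b' = t * b"
proof -
  have orth: "a' \<bullet> w = 0" if aw: "a \<bullet> w = 0" for w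
  proof (cases "w = 0")
    case False
    define d where "d = e / (2 * norm w)"
    have d: "d > 0" using False e by (simp add: d_def)
    have "s * (a' \<bullet> w) \<le> 0" if "\<bar>s\<bar> = d" for s
    proof -
      have "dist x (x + s *\<^sub>R w) < e" using that False e by (simp add: dist_norm d_def)
      hence "a' \<bullet> (x + s *\<^sub>R w) \<le> b'" using disc aw x(1) by (auto simp: inner_simps)
      thus ?thesis using x(2) by (simp add: inner_simps)
    qed
    from this[of d] this[of "-d"] show ?thesis using d by (auto simp: mult_le_0_iff zero_le_mult_iff)
  qed simp
  define t where "t = (a' \<bullet> a) / (a \<bullet> a)"
  define u where "u = a' - t *\<^sub>R a"
  have au: "a \<bullet> u = 0" using a by (simp add: u_def t_def inner_simps inner_commute)
  have "u \<bullet> u = (a' - t *\<^sub>R a) \<bullet> u" by (subst (1) u_def) rule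
  also have "\<dots> = a' \<bullet> u - t * (a \<bullet> u)" by (simp add: inner_diff_left)
  also have "\<dots> = 0" using orth[OF au] au by simp
  finally have "u = 0" by simp
  hence a't: "a' = t *\<^sub>R a" by (simp add: u_def)
  show ?thesis
  proof (rule that)
    show "t \<noteq> 0" using a' a't by auto
    show "b' = t * b" using x a't by (simp add: inner_simps)
  qed fact
qed

lemma hrefl_scale:
  assumes "t \<noteq> 0"
  shows "hrefl (t *\<^sub>R a) (t * b) = hrefl a b"
proof
  fix x
  have "lorentz (t *\<^sub>R a) (t * b) (t *\<^sub>R a) (t * b) = t * t * lorentz a b a b"
    by (simp add: lorentz_def inner_simps algebra_simps)
  hence "2 * ((t *\<^sub>R a) \<bullet> x - t * b) / lorentz (t *\<^sub>R a) (t * b) (t *\<^sub>R a) (t * b)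
      = 2 * (a \<bullet> x - b) / lorentz a b a b / t"
    using assms by (cases "lorentz a b a b = 0") (simp_all add: inner_simps field_simps)
  thus "hrefl (t *\<^sub>R a) (t * b) x = hrefl a b x"
    unfolding hrefl_def Let_def using assms by simp
qed

locale klein_polytope =
  fixes P Q :: "(real^'n) set"
  assumes polyhedron_Q: "polyhedron Q" and interior_Q: "interior Q \<noteq> {}" and P_eq: "P = kball \<inter> Q"
begin

lemma P_subset_kball: "P \<subseteq> kball"
  using P_eq by blast

lemma convex_P: "convex P"
  using P_eq polyhedron_imp_convex[OF polyhedron_Q] by (simp add: kball_def convex_Int)

lemma sets_P: "P \<in> sets borel"
  using P_eq polyhedron_imp_closed[OF polyhedron_Q] by (auto simp: kball_def)

lemma facet_pair_through_point:
  assumes zP: "z \<in> P" and zQ: "z \<notin> interior Q"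
  obtains a b where "facet_pair P a b" "a \<bullet> z = b"
proof -
  have "z \<in> Q - rel_interior Q" using zP zQ P_eq rel_interior_nonempty_interior[OF interior_Q] by auto
  then obtain F where F: "F facet_of Q" "z \<in> F" using rel_boundary_of_polyhedron[OF polyhedron_Q] by auto
  then obtain a b where ab: "a \<noteq> 0" "Q \<subseteq> {x. a \<bullet> x \<le> b}" "F = Q \<inter> {x. a \<bullet> x = b}"
    using facet_of_polyhedron[OF polyhedron_Q] by metis
  have zb: "a \<bullet> z = b" using F ab by auto
  have "\<bar>b\<bar> \<le> norm a * norm z" using zb Cauchy_Schwarz_ineq2[of a z] by simp
  also have "\<dots> < norm a" using zP P_eq ab(1) by (simp add: kball_def)
  finally have "hyp_pair a b" using ab(1) by (simp add: hyp_pair_def)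
  moreover have "aff_dim F = int CARD('n) - 1"
    using F aff_dim_nonempty_interior[OF interior_Q] by (simp add: facet_of_def)
  moreover have "aff_dim (F \<inter> kball) = aff_dim F"
    using F zP P_eq by (intro aff_dim_convex_Int_open)
      (auto simp: kball_def intro: face_of_imp_convex facet_of_imp_face_of)
  moreover have "hface P a b = F \<inter> kball" using ab P_eq by (auto simp: hface_def)
  ultimately have "facet_pair P a b" using ab P_eq by (auto simp: facet_pair_def)
  thus ?thesis using zb that by blast
qed

lemma facet_pair_disc:
  assumes "facet_pair P a b"
  obtains x e where "e > 0" "x \<in> P" "a \<bullet> x = b" "ball x e \<inter> {y. a \<bullet> y = b} \<subseteq> P"
proof -
  define F where "F = hface P a b"
  have a: "a \<noteq> 0" and dF: "aff_dim F = int CARD('n) - 1"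
    using assms by (auto simp: facet_pair_def hyp_pair_def F_def)
  have F_eq: "F = P \<inter> {x. a \<bullet> x = b}" by (auto simp: F_def hface_def)
  hence "convex F" using convex_P by (simp add: convex_Int convex_hyperplane)
  moreover have "F \<noteq> {}" using dF by auto
  ultimately obtain x where "x \<in> rel_interior F" by (metis rel_interior_eq_empty ex_in_conv)
  then obtain e where e: "e > 0" "ball x e \<inter> affine hull F \<subseteq> F" "x \<in> F"
    by (auto simp: mem_rel_interior_ball)
  have "affine hull F = {y. a \<bullet> y = b}"
  proof (rule affine_dim_equal)
    show "affine hull F \<subseteq> {y. a \<bullet> y = b}"
      by (rule hull_minimal) (auto simp: F_eq affine_hyperplane)
    show "aff_dim (affine hull F) = aff_dim {y. a \<bullet> y = b}" using dF a by simp
  qed (use \<open>F \<noteq> {}\<close> in \<open>auto simp: affine_hyperplane\<close>)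
  thus ?thesis using that e F_eq by auto
qed

lemma facet_pair_hrefl_eq:
  assumes ab: "facet_pair P a b"
  obtains F where "F facet_of Q"
    "\<And>a' b'. a' \<noteq> 0 \<Longrightarrow> Q \<subseteq> {x. a' \<bullet> x \<le> b'} \<Longrightarrow> F = Q \<inter> {x. a' \<bullet> x = b'}
      \<Longrightarrow> hrefl a' b' = hrefl a b"
proof -
  have a: "a \<noteq> 0" and below: "\<forall>y\<in>P. a \<bullet> y \<le> b"
    using ab by (auto simp: facet_pair_def hyp_pair_def)
  obtain x e where e: "e > 0" "x \<in> P" "a \<bullet> x = b" "ball x e \<inter> {y. a \<bullet> y = b} \<subseteq> P"
    using facet_pair_disc[OF ab] by blast
  have "x \<notin> interior Q"
  proof
    assume "x \<in> interior Q"
    hence "x \<in> interior P" using e(2) P_eq by (simp add: interior_Int kball_def)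
    then obtain r where r: "r > 0" "ball x r \<subseteq> P" using mem_interior by blast
    have "x + (r / (2 * norm a)) *\<^sub>R a \<in> P" using r a by (intro subsetD[OF r(2)]) (simp add: dist_norm)
    hence "a \<bullet> (x + (r / (2 * norm a)) *\<^sub>R a) \<le> b" using below by blast
    moreover have "a \<bullet> (x + (r / (2 * norm a)) *\<^sub>R a) = b + r * norm a / 2"
      using e(3) a by (simp add: inner_simps power2_norm_eq_inner[symmetric] power2_eq_square)
    ultimately show False using r a by (simp add: mult_le_0_iff)
  qed
  hence "x \<in> Q - rel_interior Q" using e(2) P_eq rel_interior_nonempty_interior[OF interior_Q] by auto
  then obtain F where F: "F facet_of Q" "x \<in> F" using rel_boundary_of_polyhedron[OF polyhedron_Q] by auto
  show ?thesis
  proof (rule that[OF F(1)])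
    fix a' b' assume a': "a' \<noteq> 0" and Q: "Q \<subseteq> {x. a' \<bullet> x \<le> b'}" and "F = Q \<inter> {x. a' \<bullet> x = b'}"
    hence "a' \<bullet> x = b'" using F(2) by auto
    moreover have "ball x e \<inter> {y. a \<bullet> y = b} \<subseteq> {y. a' \<bullet> y \<le> b'}" using e(4) Q P_eq by auto
    ultimately obtain t where "t \<noteq> 0" "a' = t *\<^sub>R a" "b' = t * b"
      using supporting_hyperplane_unique[OF a a' e(1) e(3)] by blast
    thus "hrefl a' b' = hrefl a b" by (simp add: hrefl_scale)
  qed
qed

text \<open>Each facet of P is described by infinitely many pairs (a,b), its positive rescalings,
  but they all induce the same reflection; so the reflections are indexed by the facets of Q.\<close>

lemma finite_facet_reflections: "finite {hrefl a b | a b. facet_pair P a b}"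
proof -
  define normal where "normal F = (SOME (a, b). a \<noteq> 0 \<and> Q \<subseteq> {x. a \<bullet> x \<le> b} \<and> F = Q \<inter> {x. a \<bullet> x = b})"
    for F :: "(real^'n) set"
  have normal: "fst (normal F) \<noteq> 0 \<and> Q \<subseteq> {x. fst (normal F) \<bullet> x \<le> snd (normal F)}
      \<and> F = Q \<inter> {x. fst (normal F) \<bullet> x = snd (normal F)}" if F: "F facet_of Q" for F
  proof -
    obtain a b where "a \<noteq> 0" "Q \<subseteq> {x. a \<bullet> x \<le> b}" "F = Q \<inter> {x. a \<bullet> x = b}"
      using facet_of_polyhedron[OF polyhedron_Q F] by metis
    hence "\<exists>ab. fst ab \<noteq> 0 \<and> Q \<subseteq> {x. fst ab \<bullet> x \<le> snd ab} \<and> F = Q \<inter> {x. fst ab \<bullet> x = snd ab}"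
      by (intro exI[of _ "(a, b)"]) simp
    thus ?thesis unfolding normal_def case_prod_beta by (rule someI_ex)
  qed
  have "{hrefl a b | a b. facet_pair P a b} \<subseteq> (\<lambda>F. hrefl (fst (normal F)) (snd (normal F))) ` {F. F facet_of Q}"
  proof safe
    fix a b assume ab: "facet_pair P a b"
    obtain F where F: "F facet_of Q" and eq: "\<And>a' b'. a' \<noteq> 0 \<Longrightarrow> Q \<subseteq> {x. a' \<bullet> x \<le> b'}
        \<Longrightarrow> F = Q \<inter> {x. a' \<bullet> x = b'} \<Longrightarrow> hrefl a' b' = hrefl a b"
      using facet_pair_hrefl_eq[OF ab] by auto
    have "hrefl a b = hrefl (fst (normal F)) (snd (normal F))"
      using normal[OF F] by (intro eq[symmetric]) auto
    thus "hrefl a b \<in> (\<lambda>F. hrefl (fst (normal F)) (snd (normal F))) ` {F. F facet_of Q}"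
      using F by blast
  qed
  moreover have "finite {F. F facet_of Q}"
    by (rule finite_subset[OF _ finite_polyhedron_faces[OF polyhedron_Q]]) (auto simp: facet_of_def)
  ultimately show ?thesis by (meson finite_imageI finite_subset)
qed

end

lemma refl_group_subset_compositions:
  "refl_group P \<subseteq> (\<lambda>l. foldr (\<circ>) l id) ` lists {hrefl a b | a b. facet_pair P a b}"
proof
  fix g assume "g \<in> refl_group P"
  thus "g \<in> (\<lambda>l. foldr (\<circ>) l id) ` lists {hrefl a b | a b. facet_pair P a b}"
  proof (induction rule: refl_group.induct)
    case id_in
    show ?case by (rule image_eqI[of _ _ "[]"]) auto
  next
    case (step a b g)
    then obtain l where l: "g = foldr (\<circ>) l id" "l \<in> lists {hrefl a b | a b. facet_pair P a b}" by blast
    show ?case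
    proof (rule image_eqI)
      show "hrefl a b \<circ> g = foldr (\<circ>) (hrefl a b # l) id" using l by simp
      show "hrefl a b # l \<in> lists {hrefl a b | a b. facet_pair P a b}" using l step(1) by auto
    qed
  qed
qed

lemma hrefl_measurable [measurable]: "hrefl a b \<in> borel_measurable borel"
  unfolding hrefl_def Let_def by measurable

lemma refl_group_measurable: "g \<in> refl_group P \<Longrightarrow> g \<in> borel_measurable borel"
  by (induction rule: refl_group.induct) auto

lemma hdist_measurable [measurable]:
  assumes [measurable]: "f \<in> borel_measurable M" "g \<in> borel_measurable M"
  shows "(\<lambda>x. hdist (f x) (g x)) \<in> borel_measurable M"
  unfolding hdist_def arcosh_def by measurable

lemma (in klein_polytope) sets_P_le: "P_le P R \<in> sets borel"
proof -
  define \<Gamma> where "\<Gamma> = {g \<in> refl_group P. \<exists>y\<in>kball. g y \<noteq> y}"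
  have "countable (lists {hrefl a b | a b. facet_pair P a b})"
    using finite_facet_reflections by (intro countable_lists countable_finite)
  hence "countable (refl_group P)"
    by (rule countable_subset[OF refl_group_subset_compositions countable_image])
  hence "countable \<Gamma>" by (simp add: \<Gamma>_def)
  moreover have "{x. hdist x (g x) \<le> R / 2} \<in> sets borel" if "g \<in> \<Gamma>" for g
  proof -
    have [measurable]: "g \<in> borel_measurable borel" using that refl_group_measurable by (auto simp: \<Gamma>_def)
    show ?thesis by measurable
  qed
  ultimately have "(\<Union>g\<in>\<Gamma>. {x. hdist x (g x) \<le> R / 2}) \<in> sets borel" by (rule sets.countable_UN'')
  moreover have "P_le P R = P \<inter> (\<Union>g\<in>\<Gamma>. {x. hdist x (g x) \<le> R / 2})"
    by (auto simp: P_le_def \<Gamma>_def)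
  ultimately show ?thesis using sets_P by simp
qed

section \<open>Integrals of powers of cosh\<close>

definition cosh_pow_integral :: "nat \<Rightarrow> real \<Rightarrow> real \<Rightarrow> ennreal" where
  "cosh_pow_integral m \<sigma> \<tau> = (\<integral>\<^sup>+ s. ennreal (cosh s ^ m) * indicator {\<sigma>..\<tau>} s \<partial>lborel)"

lemma cosh_measurable [measurable]: "(cosh :: real \<Rightarrow> real) \<in> borel_measurable borel"
  by (intro borel_measurable_continuous_onI continuous_intros)

lemma cosh_pow_integral_mono:
  "\<sigma>' \<le> \<sigma> \<Longrightarrow> \<tau> \<le> \<tau>' \<Longrightarrow> cosh_pow_integral m \<sigma> \<tau> \<le> cosh_pow_integral m \<sigma>' \<tau>'"
  unfolding cosh_pow_integral_def by (intro nn_integral_mono) (auto split: split_indicator)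

lemma cosh_pow_integral_split:
  "cosh_pow_integral m \<sigma> \<tau> \<le> cosh_pow_integral m \<sigma> \<mu> + cosh_pow_integral m \<mu> \<tau>"
proof -
  have "cosh_pow_integral m \<sigma> \<tau> \<le> (\<integral>\<^sup>+ s. ennreal (cosh s ^ m) * indicator {\<sigma>..\<mu>} s
      + ennreal (cosh s ^ m) * indicator {\<mu>..\<tau>} s \<partial>lborel)"
    unfolding cosh_pow_integral_def by (intro nn_integral_mono) (auto split: split_indicator)
  also have "\<dots> = cosh_pow_integral m \<sigma> \<mu> + cosh_pow_integral m \<mu> \<tau>"
    unfolding cosh_pow_integral_def by (rule nn_integral_add) auto
  finally show ?thesis .
qed

lemma cosh_pow_integral_shift:
  "cosh_pow_integral m (\<sigma> - h) (\<tau> - h)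
    = (\<integral>\<^sup>+ x. ennreal (cosh (x - h) ^ m) * indicator {\<sigma>..\<tau>} x \<partial>lborel)"
proof -
  have "cosh_pow_integral m (\<sigma> - h) (\<tau> - h) = ennreal \<bar>1\<bar> * (\<integral>\<^sup>+ x. ennreal (cosh (-h + 1 * x) ^ m)
      * indicator {\<sigma> - h..\<tau> - h} (-h + 1 * x) \<partial>lborel)"
    unfolding cosh_pow_integral_def by (rule nn_integral_real_affine) auto
  also have "\<dots> = (\<integral>\<^sup>+ x. ennreal (cosh (x - h) ^ m) * indicator {\<sigma>..\<tau>} x \<partial>lborel)"
    by (auto intro!: nn_integral_cong split: split_indicator)
  finally show ?thesis .
qed

lemma cosh_pow_integral_reflect: "cosh_pow_integral m (-\<tau>) (-\<sigma>) = cosh_pow_integral m \<sigma> \<tau>"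
proof -
  have "cosh_pow_integral m (-\<tau>) (-\<sigma>) = ennreal \<bar>-1\<bar> * (\<integral>\<^sup>+ x. ennreal (cosh (0 + (-1) * x) ^ m)
      * indicator {-\<tau>..-\<sigma>} (0 + (-1) * x) \<partial>lborel)"
    unfolding cosh_pow_integral_def by (rule nn_integral_real_affine) auto
  also have "\<dots> = cosh_pow_integral m \<sigma> \<tau>"
    unfolding cosh_pow_integral_def by (auto intro!: nn_integral_cong split: split_indicator)
  finally show ?thesis .
qed

lemma cosh_pow_integral_ge_length:
  assumes "\<sigma> \<le> \<tau>"
  shows "ennreal (\<tau> - \<sigma>) \<le> cosh_pow_integral m \<sigma> \<tau>"
proof -
  have "ennreal (\<tau> - \<sigma>) = (\<integral>\<^sup>+ s. indicator {\<sigma>..\<tau>} s \<partial>lborel)" using assms by simp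
  also have "\<dots> \<le> cosh_pow_integral m \<sigma> \<tau>"
    unfolding cosh_pow_integral_def
    by (intro nn_integral_mono) (auto simp: one_le_power[OF cosh_real_ge_1] split: split_indicator)
  finally show ?thesis .
qed

definition cosh_decay :: real where
  "cosh_decay = 1 / cosh (1/2)"

lemma cosh_decay_bounds: "0 < cosh_decay" "cosh_decay < 1"
proof -
  have "cosh 0 < cosh (1/2::real)" by (subst cosh_real_nonneg_less_iff) auto
  thus "0 < cosh_decay" "cosh_decay < 1" by (auto simp: cosh_decay_def)
qed

lemma cosh_pow_shift_le:
  assumes "1/2 \<le> u" and "1 \<le> m"
  shows "cosh (u - 1/2) ^ m \<le> cosh_decay * cosh u ^ m"
proof -
  define h :: real where "h = 1/2"
  have "0 \<le> sinh (u - h)" using assms(1) by (simp add: h_def)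
  hence le: "cosh u * sinh h \<le> sinh u * cosh h" by (simp add: sinh_diff)
  have "cosh (u - h) * cosh h = cosh u * (cosh h)\<^sup>2 - sinh u * sinh h * cosh h"
    by (simp add: cosh_diff power2_eq_square algebra_simps)
  also have "\<dots> = cosh u * ((sinh h)\<^sup>2 + 1) - sinh u * sinh h * cosh h"
    by (simp only: cosh_square_eq)
  also have "\<dots> = cosh u + sinh h * (cosh u * sinh h - sinh u * cosh h)"
    by (simp add: algebra_simps power2_eq_square)
  also have "\<dots> \<le> cosh u" using le by (simp add: h_def mult_le_0_iff)
  finally have "cosh (u - h) * cosh h \<le> cosh u" .
  hence "cosh (u - 1/2) \<le> cosh_decay * cosh u" by (simp add: cosh_decay_def h_def field_simps)
  hence "cosh (u - 1/2) ^ m \<le> cosh_decay ^ m * cosh u ^ m"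
    by (metis power_mono power_mult_distrib cosh_real_nonneg)
  also have "\<dots> \<le> cosh_decay * cosh u ^ m"
    using power_decreasing[of 1 m cosh_decay] cosh_decay_bounds assms(2) by (intro mult_right_mono) auto
  finally show ?thesis .
qed

text \<open>The factor 2 serves intervals \<open>[0, s]\<close> with \<open>s \<le> 1\<close>; \<open>1 / (1 - cosh_decay)\<close> sums the
  geometric decay over longer ones.\<close>

definition ends_const :: real where
  "ends_const = max 2 (1 / (1 - cosh_decay))"

lemma ends_const: "2 \<le> ends_const" "ends_const * cosh_decay + 1 \<le> ends_const"
proof -
  show "2 \<le> ends_const" by (simp add: ends_const_def)
  have "1 / (1 - cosh_decay) \<le> ends_const" by (simp add: ends_const_def)
  thus "ends_const * cosh_decay + 1 \<le> ends_const"
    using cosh_decay_bounds by (simp add: field_simps)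
qed

lemma ennreal_mult_right_mono_const: "c \<le> d \<Longrightarrow> ennreal c * x \<le> ennreal d * x"
  by (intro mult_right_mono ennreal_leI) auto

lemma cosh_pow_integral_block_le:
  assumes "1 \<le> s" "1 \<le> m"
  shows "cosh_pow_integral m (s - 1) (s - 1/2) \<le> ennreal cosh_decay * cosh_pow_integral m (s - 1/2) s"
proof -
  have "cosh_pow_integral m (s - 1) (s - 1/2) = cosh_pow_integral m ((s - 1/2) - 1/2) (s - 1/2)" by simp
  also have "\<dots> = (\<integral>\<^sup>+ x. ennreal (cosh (x - 1/2) ^ m) * indicator {s - 1/2..s} x \<partial>lborel)"
    by (rule cosh_pow_integral_shift)
  also have "\<dots> \<le> (\<integral>\<^sup>+ x. ennreal cosh_decay * (ennreal (cosh x ^ m) * indicator {s - 1/2..s} x) \<partial>lborel)"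
    using assms cosh_pow_shift_le cosh_decay_bounds
    by (intro nn_integral_mono) (auto simp: ennreal_mult[symmetric] split: split_indicator)
  also have "\<dots> = ennreal cosh_decay * cosh_pow_integral m (s - 1/2) s"
    unfolding cosh_pow_integral_def by (rule nn_integral_cmult) auto
  finally show ?thesis .
qed

lemma cosh_pow_integral_initial_le:
  assumes "s \<le> 1"
  shows "cosh_pow_integral m 0 s \<le> 2 * cosh_pow_integral m (s - 1/2) s"
proof (cases "s \<le> 1/2")
  case True
  hence "cosh_pow_integral m 0 s \<le> cosh_pow_integral m (s - 1/2) s"
    by (intro cosh_pow_integral_mono) auto
  thus ?thesis by (simp add: mult_2 add_increasing2)
next
  case False
  have "cosh_pow_integral m 0 (s - 1/2) = cosh_pow_integral m (1/2 - 1/2) (s - 1/2)" by simp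
  also have "\<dots> = (\<integral>\<^sup>+ x. ennreal (cosh (x - 1/2) ^ m) * indicator {1/2..s} x \<partial>lborel)"
    by (rule cosh_pow_integral_shift)
  also have "\<dots> \<le> cosh_pow_integral m (s - 1/2) s"
    unfolding cosh_pow_integral_def using assms
    by (intro nn_integral_mono)
      (auto intro!: power_mono ennreal_leI simp: cosh_real_nonneg_le_iff split: split_indicator)
  finally have "cosh_pow_integral m 0 (s - 1/2) \<le> cosh_pow_integral m (s - 1/2) s" .
  hence "cosh_pow_integral m 0 s \<le> cosh_pow_integral m (s - 1/2) s + cosh_pow_integral m (s - 1/2) s"
    using cosh_pow_integral_split[of m 0 s "s - 1/2"] by (meson add_right_mono order_trans)
  thus ?thesis by (simp add: mult_2)
qed

text \<open>On \<open>[0, s]\<close> the weight \<open>cosh\<^sup>m\<close> decays geometrically (ratio \<open>cosh_decay\<close>) per half unit away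
  from s, so the last half unit carries a fixed fraction of the mass.\<close>

lemma cosh_pow_integral_from_zero_step:
  assumes m: "1 \<le> m" and s: "1 \<le> s"
    and prev: "cosh_pow_integral m 0 (s - 1/2)
      \<le> ennreal ends_const * cosh_pow_integral m (s - 1/2 - 1/2) (s - 1/2)"
  shows "cosh_pow_integral m 0 s \<le> ennreal ends_const * cosh_pow_integral m (s - 1/2) s"
proof -
  let ?I = "cosh_pow_integral m (s - 1/2) s"
  have "cosh_pow_integral m 0 s \<le> cosh_pow_integral m 0 (s - 1/2) + ?I"
    by (rule cosh_pow_integral_split)
  also have "cosh_pow_integral m 0 (s - 1/2) \<le> ennreal ends_const * (ennreal cosh_decay * ?I)"
  proof -
    have "cosh_pow_integral m (s - 1/2 - 1/2) (s - 1/2) \<le> ennreal cosh_decay * ?I"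
      using cosh_pow_integral_block_le[OF s m] by simp
    hence "ennreal ends_const * cosh_pow_integral m (s - 1/2 - 1/2) (s - 1/2)
        \<le> ennreal ends_const * (ennreal cosh_decay * ?I)" by (rule mult_left_mono) simp
    with prev show ?thesis by (rule order_trans)
  qed
  also have "ennreal ends_const * (ennreal cosh_decay * ?I) + ?I = ennreal (ends_const * cosh_decay + 1) * ?I"
    using ends_const cosh_decay_bounds by (simp add: ennreal_mult distrib_right mult.assoc ennreal_plus[symmetric])
  also have "\<dots> \<le> ennreal ends_const * ?I"
    by (rule ennreal_mult_right_mono_const[OF ends_const(2)])
  finally show ?thesis by (simp add: add_right_mono)
qed

lemma cosh_pow_integral_from_zero_le:
  assumes m: "1 \<le> m"
  shows "cosh_pow_integral m 0 s \<le> ennreal ends_const * cosh_pow_integral m (s - 1/2) s"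
proof -
  have initial: "cosh_pow_integral m 0 s \<le> ennreal ends_const * cosh_pow_integral m (s - 1/2) s"
    if "s \<le> 1" for s
  proof -
    have "cosh_pow_integral m 0 s \<le> 2 * cosh_pow_integral m (s - 1/2) s"
      by (rule cosh_pow_integral_initial_le[OF that])
    also have "\<dots> \<le> ennreal ends_const * cosh_pow_integral m (s - 1/2) s"
      using ennreal_mult_right_mono_const[OF ends_const(1)] by simp
    finally show ?thesis .
  qed
  have bound: "\<forall>s. s \<le> real n / 2 \<longrightarrow>
      cosh_pow_integral m 0 s \<le> ennreal ends_const * cosh_pow_integral m (s - 1/2) s" for n
  proof (induction n)
    case 0
    show ?case by (intro allI impI initial) simp
  next
    case (Suc n)
    show ?case
    proof (intro allI impI)
      fix s :: real assume s: "s \<le> real (Suc n) / 2"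
      show "cosh_pow_integral m 0 s \<le> ennreal ends_const * cosh_pow_integral m (s - 1/2) s"
      proof (cases "s \<le> 1")
        case True
        thus ?thesis by (rule initial)
      next
        case False
        have "s - 1/2 \<le> real n / 2" using s by simp
        hence "cosh_pow_integral m 0 (s - 1/2)
            \<le> ennreal ends_const * cosh_pow_integral m (s - 1/2 - 1/2) (s - 1/2)"
          by (rule Suc.IH[rule_format])
        moreover have "1 \<le> s" using False by simp
        ultimately show ?thesis using cosh_pow_integral_from_zero_step[OF m] by blast
      qed
    qed
  qed
  obtain n :: nat where "2 * s \<le> real n" using real_arch_simple by blast
  hence "s \<le> real n / 2" by simp
  thus ?thesis by (rule bound[rule_format])
qed

lemma cosh_pow_integral_le_ends:
  assumes m: "1 \<le> m"
  shows "cosh_pow_integral m \<sigma> \<tau> \<le> ennreal ends_const *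
    (cosh_pow_integral m \<sigma> (min (\<sigma> + 1/2) \<tau>) + cosh_pow_integral m (max (\<tau> - 1/2) \<sigma>) \<tau>)"
proof (cases "\<tau> - \<sigma> \<le> 1/2")
  case True
  let ?J = "cosh_pow_integral m (max (\<tau> - 1/2) \<sigma>) \<tau>"
  have min: "min (\<sigma> + 1/2) \<tau> = \<tau>" using True by simp
  have "cosh_pow_integral m \<sigma> \<tau> \<le> ennreal 1 * (cosh_pow_integral m \<sigma> \<tau> + ?J)"
    by (simp add: add_increasing2)
  also have "\<dots> \<le> ennreal ends_const * (cosh_pow_integral m \<sigma> \<tau> + ?J)"
    using ends_const(1) by (intro ennreal_mult_right_mono_const) simp
  finally show ?thesis unfolding min .
next
  case False
  let ?K = "ennreal ends_const" and ?I = "cosh_pow_integral m"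
  have "?I \<sigma> 0 \<le> ?K * ?I \<sigma> (\<sigma> + 1/2)"
    using cosh_pow_integral_from_zero_le[OF m, of "-\<sigma>"]
      cosh_pow_integral_reflect[of m 0 \<sigma>] cosh_pow_integral_reflect[of m "\<sigma> + 1/2" \<sigma>] by simp
  moreover have "?I 0 \<tau> \<le> ?K * ?I (\<tau> - 1/2) \<tau>" by (rule cosh_pow_integral_from_zero_le[OF m])
  ultimately have "?I \<sigma> 0 + ?I 0 \<tau> \<le> ?K * (?I \<sigma> (\<sigma> + 1/2) + ?I (\<tau> - 1/2) \<tau>)"
    by (simp add: distrib_left add_mono)
  with cosh_pow_integral_split[of m \<sigma> \<tau> 0]
  have "?I \<sigma> \<tau> \<le> ?K * (?I \<sigma> (\<sigma> + 1/2) + ?I (\<tau> - 1/2) \<tau>)" by (rule order_trans)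
  moreover have "min (\<sigma> + 1/2) \<tau> = \<sigma> + 1/2" "max (\<tau> - 1/2) \<sigma> = \<tau> - 1/2" using False by auto
  ultimately show ?thesis by simp
qed

section \<open>Hyperbolic volume along lines\<close>

definition hvol_density :: "real^'n \<Rightarrow> ennreal" where
  "hvol_density x = indicator kball x * ennreal ((1 - (norm x)\<^sup>2) powr (- (real CARD('n) + 1) / 2))"

lemma hvol_density_measurable [measurable]: "hvol_density \<in> borel_measurable borel"
proof -
  have "indicator kball \<in> borel_measurable (borel :: (real^'n) measure)"
    unfolding kball_def by (intro borel_measurable_indicator) auto
  thus ?thesis unfolding hvol_density_def by measurable
qed

lemma hvol_eq_nn_integral:
  fixes S :: "(real^'n) set"
  assumes "S \<in> sets borel"
  shows "hvol S = (\<integral>\<^sup>+x. hvol_density x * indicator S x \<partial>lborel)"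
proof -
  have "hvol_measure = density lborel (hvol_density :: real^'n \<Rightarrow> ennreal)"
    unfolding hvol_measure_def hvol_density_def by (simp add: fun_eq_iff)
  hence "hvol S = emeasure (density lborel hvol_density) S" by (simp add: hvol_def)
  also have "\<dots> = (\<integral>\<^sup>+x. hvol_density x * indicator S x \<partial>lborel)"
    by (rule emeasure_density) (auto simp: assms)
  finally show ?thesis .
qed

definition hvol_slice :: "real^'n \<Rightarrow> real^'n \<Rightarrow> (real^'n) set \<Rightarrow> ennreal" where
  "hvol_slice v u S = (\<integral>\<^sup>+y. hvol_density (v + y *\<^sub>R u) * indicator S (v + y *\<^sub>R u) \<partial>lborel)"

lemma hvol_slice_mono: "S \<subseteq> T \<Longrightarrow> hvol_slice v u S \<le> hvol_slice v u T"
  unfolding hvol_slice_def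
  by (intro nn_integral_mono mult_left_mono) (auto split: split_indicator)

lemma hvol_slice_outside:
  fixes v u :: "real^'n"
  assumes "norm u = 1" "v \<bullet> u = 0" "1 \<le> norm v"
  shows "hvol_slice v u S = 0"
proof -
  have "1 \<le> (norm v)\<^sup>2" using assms(3) by (simp add: one_le_power)
  hence "\<not> y\<^sup>2 < 1 - (norm v)\<^sup>2" for y using zero_le_power2[of y] by linarith
  hence "v + y *\<^sub>R u \<notin> kball" for y by (simp add: line_point_in_kball_iff[OF assms(1,2)])
  thus ?thesis by (simp add: hvol_slice_def hvol_density_def)
qed

lemma hvol_slice_eq_chord_image:
  fixes v u :: "real^'n"
  assumes u: "norm u = 1" and vu: "v \<bullet> u = 0" and S: "S \<subseteq> kball"
  shows "hvol_slice v u S = hvol_slice v u (chord v u ` {s. chord v u s \<in> S})"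
proof -
  have "v + y *\<^sub>R u \<in> S \<longleftrightarrow> v + y *\<^sub>R u \<in> chord v u ` {s. chord v u s \<in> S}" for y
  proof
    assume y: "v + y *\<^sub>R u \<in> S"
    hence "v + y *\<^sub>R u = chord v u (artanh (y / sqrt (1 - (norm v)\<^sup>2)))"
      using S by (intro line_point_eq_chord[OF u vu]) auto
    thus "v + y *\<^sub>R u \<in> chord v u ` {s. chord v u s \<in> S}" using y by auto
  qed auto
  thus ?thesis unfolding hvol_slice_def by (simp add: indicator_def)
qed

lemma tanh_subst_density:
  fixes a s :: real
  assumes a: "a > 0" and d: "d \<ge> 1"
  shows "(a * a - (a * tanh s)\<^sup>2) powr (-(real d + 1)/2) * (a * (1 - tanh s ^ 2)) = cosh s ^ (d - 1) / a ^ d"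
proof -
  define c where "c = cosh s"
  have c: "c > 0" by (simp add: c_def)
  have "a * a - (a * tanh s)\<^sup>2 = a\<^sup>2 * (1 - tanh s ^ 2)" by (simp add: power2_eq_square algebra_simps)
  also have "\<dots> = (a / c)\<^sup>2" by (simp add: one_minus_tanh_sq c_def power_divide)
  finally have "(a * a - (a * tanh s)\<^sup>2) powr (-(real d + 1)/2) = ((a / c) powr 2) powr (-(real d + 1)/2)"
    using a c by (simp add: powr_realpow)
  also have "\<dots> = (a / c) powr (- real (d + 1))"
  proof -
    have "2 * (-(real d + 1)/2) = - real (d + 1)" by simp
    thus ?thesis by (simp only: powr_powr)
  qed
  also have "\<dots> = inverse ((a / c) powr real (d + 1))" by (rule powr_minus)
  also have "(a / c) powr real (d + 1) = (a / c) ^ (d + 1)" using a c by (intro powr_realpow) simp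
  also have "inverse ((a / c) ^ (d + 1)) = c ^ (d + 1) / a ^ (d + 1)" by (simp add: power_divide)
  finally have 1: "(a * a - (a * tanh s)\<^sup>2) powr (-(real d + 1)/2) = c ^ (d + 1) / a ^ (d + 1)" .
  have 2: "a * (1 - tanh s ^ 2) = a / c\<^sup>2" by (simp add: one_minus_tanh_sq c_def)
  have "c ^ (d + 1) = c ^ (d - 1) * c\<^sup>2" using d by (simp add: power_add[symmetric])
  hence "c ^ (d + 1) / a ^ (d + 1) * (a / c\<^sup>2) = c ^ (d - 1) / a ^ d"
    using a c by (simp add: field_simps)
  thus ?thesis using 1 2 by (simp add: c_def)
qed

lemma nn_integral_tanh_subst:
  fixes a :: real
  assumes a: "a > 0" and d: "d \<ge> 1" and st: "\<sigma> \<le> \<tau>"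
  shows "(\<integral>\<^sup>+ y. ennreal ((a * a - y\<^sup>2) powr (-(real d + 1)/2) * indicator {a * tanh \<sigma>..a * tanh \<tau>} y) \<partial>lborel)
       = ennreal (1 / a ^ d) * cosh_pow_integral (d - 1) \<sigma> \<tau>"
proof -
  have "(\<integral>\<^sup>+ y. ennreal ((a * a - y\<^sup>2) powr (-(real d + 1)/2) * indicator {a * tanh \<sigma>..a * tanh \<tau>} y) \<partial>lborel)
     = (\<integral>\<^sup>+ s. ennreal ((a * a - (a * tanh s)\<^sup>2) powr (-(real d + 1)/2) * (a * (1 - tanh s ^ 2))
         * indicator {\<sigma>..\<tau>} s) \<partial>lborel)"
  proof (rule nn_integral_substitution[OF _ _ _ _ st])
    show "set_borel_measurable borel {a * tanh \<sigma>..a * tanh \<tau>} (\<lambda>y. (a * a - y\<^sup>2) powr (-(real d + 1)/2))"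
      unfolding set_borel_measurable_def by measurable
    fix x :: real
    show "((\<lambda>s. a * tanh s) has_real_derivative a * (1 - tanh x ^ 2)) (at x)"
      using cosh_real_pos[of x] by (auto intro!: derivative_eq_intros)
    show "0 \<le> a * (1 - tanh x ^ 2)" using a by (simp add: one_minus_tanh_sq)
  next
    show "continuous_on {\<sigma>..\<tau>} (\<lambda>x. a * (1 - tanh x ^ 2))"
      by (intro continuous_intros) (auto simp: cosh_real_pos[THEN less_imp_neq, symmetric])
  qed
  also have "\<dots> = (\<integral>\<^sup>+ s. ennreal (1 / a ^ d) * (ennreal (cosh s ^ (d - 1)) * indicator {\<sigma>..\<tau>} s) \<partial>lborel)"
  proof (intro nn_integral_cong)
    fix s :: real
    show "ennreal ((a * a - (a * tanh s)\<^sup>2) powr (-(real d + 1)/2) * (a * (1 - tanh s ^ 2)) * indicator {\<sigma>..\<tau>} s)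
        = ennreal (1 / a ^ d) * (ennreal (cosh s ^ (d - 1)) * indicator {\<sigma>..\<tau>} s)"
      using a by (subst tanh_subst_density[OF a d]) (simp add: ennreal_mult[symmetric] split: split_indicator)
  qed
  also have "\<dots> = ennreal (1 / a ^ d) * cosh_pow_integral (d - 1) \<sigma> \<tau>"
    unfolding cosh_pow_integral_def by (rule nn_integral_cmult) auto
  finally show ?thesis .
qed

lemma line_point_in_chord_image_iff:
  fixes v u :: "real^'n"
  assumes u: "norm u = 1" and v: "norm v < 1"
  shows "v + y *\<^sub>R u \<in> chord v u ` {\<sigma>..\<tau>}
    \<longleftrightarrow> y \<in> {sqrt (1 - (norm v)\<^sup>2) * tanh \<sigma>..sqrt (1 - (norm v)\<^sup>2) * tanh \<tau>}"
proof -
  define a where "a = sqrt (1 - (norm v)\<^sup>2)"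
  have a: "a > 0" using one_minus_norm_sq_pos[OF v] by (simp add: a_def)
  have "v + y *\<^sub>R u \<in> chord v u ` {\<sigma>..\<tau>} \<longleftrightarrow> y \<in> {a * tanh \<sigma>..a * tanh \<tau>}"
  proof
    assume "v + y *\<^sub>R u \<in> chord v u ` {\<sigma>..\<tau>}"
    then obtain s where "s \<in> {\<sigma>..\<tau>}" "y *\<^sub>R u = (a * tanh s) *\<^sub>R u" by (auto simp: chord_def a_def)
    moreover have "u \<noteq> 0" using u by auto
    ultimately show "y \<in> {a * tanh \<sigma>..a * tanh \<tau>}" using a by auto
  next
    assume y: "y \<in> {a * tanh \<sigma>..a * tanh \<tau>}"
    define s where "s = artanh (y / a)"
    have "\<bar>y\<bar> < a" using y mult_strict_left_mono[OF tanh_real_lt_1[of \<tau>] a]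
      mult_strict_left_mono[OF tanh_real_gt_neg1[of \<sigma>] a] by (auto simp: abs_less_iff)
    hence ys: "y = a * tanh s" using a by (simp add: s_def tanh_artanh_real abs_less_iff field_simps)
    hence "s \<in> {\<sigma>..\<tau>}" using y a by auto
    thus "v + y *\<^sub>R u \<in> chord v u ` {\<sigma>..\<tau>}" using ys by (auto simp: chord_def a_def)
  qed
  thus ?thesis by (simp add: a_def)
qed

lemma hvol_slice_chord_image:
  fixes v u :: "real^'n"
  assumes u: "norm u = 1" and vu: "v \<bullet> u = 0" and v: "norm v < 1" and st: "\<sigma> \<le> \<tau>"
  shows "hvol_slice v u (chord v u ` {\<sigma>..\<tau>})
    = ennreal (1 / sqrt (1 - (norm v)\<^sup>2) ^ CARD('n)) * cosh_pow_integral (CARD('n) - 1) \<sigma> \<tau>"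
proof -
  define a where "a = sqrt (1 - (norm v)\<^sup>2)"
  have a: "a > 0" using one_minus_norm_sq_pos[OF v] by (simp add: a_def)
  have aa: "a * a = 1 - (norm v)\<^sup>2" using one_minus_norm_sq_pos[OF v] by (simp add: a_def)
  have d: "1 \<le> CARD('n)" by (simp add: Suc_le_eq finite_UNIV_card_ge_0)
  note image = line_point_in_chord_image_iff[OF u v, of _ \<sigma> \<tau>, folded a_def]
  have density: "hvol_density (v + y *\<^sub>R u) * indicator (chord v u ` {\<sigma>..\<tau>}) (v + y *\<^sub>R u)
      = ennreal ((a * a - y\<^sup>2) powr (-(real CARD('n) + 1)/2) * indicator {a * tanh \<sigma>..a * tanh \<tau>} y)" for y
  proof (cases "y \<in> {a * tanh \<sigma>..a * tanh \<tau>}")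
    case True
    then obtain s where "v + y *\<^sub>R u = chord v u s" using image by auto
    hence "v + y *\<^sub>R u \<in> kball" using chord_in_kball[OF u vu v] by simp
    thus ?thesis using True image
      by (simp add: hvol_density_def norm_line_point_sq[OF u vu] aa algebra_simps)
  qed (use image in simp)
  have "hvol_slice v u (chord v u ` {\<sigma>..\<tau>})
      = (\<integral>\<^sup>+ y. ennreal ((a * a - y\<^sup>2) powr (-(real CARD('n) + 1)/2)
          * indicator {a * tanh \<sigma>..a * tanh \<tau>} y) \<partial>lborel)"
    unfolding hvol_slice_def density by (rule refl)
  also have "\<dots> = ennreal (1 / a ^ CARD('n)) * cosh_pow_integral (CARD('n) - 1) \<sigma> \<tau>"
    by (rule nn_integral_tanh_subst[OF a d st])
  finally show ?thesis unfolding a_def .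
qed

section \<open>Slices of a polytope\<close>

lemma convex_line_point:
  fixes v u :: "'a::real_vector"
  assumes S: "convex S" and y1: "v + y1 *\<^sub>R u \<in> S" and y2: "v + y2 *\<^sub>R u \<in> S" and y: "y1 \<le> y" "y \<le> y2"
  shows "v + y *\<^sub>R u \<in> S"
proof (cases "y1 = y2")
  case False
  define \<theta> where "\<theta> = (y - y1) / (y2 - y1)"
  have \<theta>: "0 \<le> \<theta>" "\<theta> \<le> 1" using y False by (auto simp: \<theta>_def field_simps)
  have "\<theta> * (y2 - y1) = y - y1" using False by (simp add: \<theta>_def)
  hence "(1 - \<theta>) * y1 + \<theta> * y2 = y" by (simp add: algebra_simps)
  moreover have "(1 - \<theta>) *\<^sub>R (v + y1 *\<^sub>R u) + \<theta> *\<^sub>R (v + y2 *\<^sub>R u)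
      = v + ((1 - \<theta>) * y1 + \<theta> * y2) *\<^sub>R u"
    by (simp add: algebra_simps)
  ultimately have "(1 - \<theta>) *\<^sub>R (v + y1 *\<^sub>R u) + \<theta> *\<^sub>R (v + y2 *\<^sub>R u) = v + y *\<^sub>R u" by simp
  moreover have "(1 - \<theta>) *\<^sub>R (v + y1 *\<^sub>R u) + \<theta> *\<^sub>R (v + y2 *\<^sub>R u) \<in> S"
    using convexD[OF S y1 y2, of "1 - \<theta>" \<theta>] \<theta> by simp
  ultimately show ?thesis by simp
qed (use y y1 in simp)

context klein_polytope
begin

context
  fixes v u :: "real^'n"
  assumes u: "norm u = 1" and vu: "v \<bullet> u = 0" and v: "norm v < 1"
begin

lemma chord_preimage_eq: "{s. chord v u s \<in> P} = chord v u -` Q"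
  using chord_in_kball[OF u vu v] P_eq by auto

lemma closed_chord_preimage: "closed {s. chord v u s \<in> P}"
  unfolding chord_preimage_eq
  by (intro closed_vimage polyhedron_imp_closed[OF polyhedron_Q] continuous_on_chord)

lemma convex_chord_preimage: "convex {s. chord v u s \<in> P}"
  unfolding is_interval_convex_1[symmetric] is_interval_1
proof (intro ballI allI impI, elim conjE)
  fix s t r assume s: "s \<in> {s. chord v u s \<in> P}" and t: "t \<in> {s. chord v u s \<in> P}" and r: "s \<le> r" "r \<le> t"
  have a: "0 < sqrt (1 - (norm v)\<^sup>2)" using one_minus_norm_sq_pos[OF v] by simp
  show "r \<in> {s. chord v u s \<in> P}"
    using convex_line_point[OF convex_P, of v "sqrt (1 - (norm v)\<^sup>2) * tanh s" u
        "sqrt (1 - (norm v)\<^sup>2) * tanh t" "sqrt (1 - (norm v)\<^sup>2) * tanh r"] s t r a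
    by (simp add: chord_def)
qed

lemma bounded_chord_preimage:
  assumes fin: "hvol_slice v u P < \<infinity>"
  shows "bounded {s. chord v u s \<in> P}"
proof -
  define A where "A = 1 / sqrt (1 - (norm v)\<^sup>2) ^ CARD('n)"
  have A: "A > 0" using one_minus_norm_sq_pos[OF v] by (simp add: A_def)
  obtain r where r: "hvol_slice v u P = ennreal r" "0 \<le> r" using fin by (cases "hvol_slice v u P") auto
  have length: "t - s \<le> r / A" if "s \<le> t" "s \<in> {s. chord v u s \<in> P}" "t \<in> {s. chord v u s \<in> P}" for s t
  proof -
    have "is_interval {s. chord v u s \<in> P}"
      unfolding is_interval_convex_1 by (rule convex_chord_preimage)
    hence "r \<in> {s. chord v u s \<in> P}" if "r \<in> {s..t}" for r
      using that \<open>s \<in> {s. chord v u s \<in> P}\<close> \<open>t \<in> {s. chord v u s \<in> P}\<close>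
      by (elim is_interval_1[THEN iffD1, rule_format]) auto
    hence "chord v u ` {s..t} \<subseteq> P" by blast
    hence "hvol_slice v u (chord v u ` {s..t}) \<le> hvol_slice v u P" by (rule hvol_slice_mono)
    moreover have "ennreal A * ennreal (t - s) \<le> hvol_slice v u (chord v u ` {s..t})"
      unfolding hvol_slice_chord_image[OF u vu v \<open>s \<le> t\<close>] A_def[symmetric]
      by (intro mult_left_mono cosh_pow_integral_ge_length \<open>s \<le> t\<close>) simp
    ultimately have "ennreal A * ennreal (t - s) \<le> hvol_slice v u P" by (rule order_trans[rotated])
    hence "A * (t - s) \<le> r" using A r that(1) by (simp add: ennreal_mult[symmetric])
    thus ?thesis using A by (simp add: field_simps)
  qed
  show ?thesis
  proof (cases "{s. chord v u s \<in> P} = {}")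
    case False
    then obtain c where c: "c \<in> {s. chord v u s \<in> P}" by blast
    have "{s. chord v u s \<in> P} \<subseteq> cball c (r / A)"
    proof
      fix s assume s: "s \<in> {s. chord v u s \<in> P}"
      have "\<bar>s - c\<bar> \<le> r / A"
        using length[OF _ c s] length[OF _ s c] by (cases "c \<le> s") auto
      thus "s \<in> cball c (r / A)" by (simp add: dist_real_def abs_minus_commute)
    qed
    thus ?thesis by (rule bounded_subset[OF bounded_cball])
  qed simp
qed

lemma chord_preimage_interval:
  assumes "hvol_slice v u P < \<infinity>"
  obtains s0 s1 where "{s. chord v u s \<in> P} = {s0..s1}"
proof -
  have "connected {s. chord v u s \<in> P}" by (rule convex_connected[OF convex_chord_preimage])
  moreover have "compact {s. chord v u s \<in> P}"
    using closed_chord_preimage bounded_chord_preimage[OF assms] by (simp add: compact_eq_bounded_closed)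
  ultimately show ?thesis using connected_compact_interval_1 that by blast
qed

lemma chord_endpoint_not_interior:
  assumes J: "{s. chord v u s \<in> P} = {s0..s1}" and s: "s \<in> {s0, s1}" "s0 \<le> s1"
  shows "chord v u s \<notin> interior Q"
proof
  assume "chord v u s \<in> interior Q"
  moreover have "open (chord v u -` interior Q)" by (intro open_vimage open_interior continuous_on_chord)
  moreover have "chord v u -` interior Q \<subseteq> {s0..s1}"
    using J chord_preimage_eq interior_subset by blast
  ultimately have "s \<in> interior {s0..s1}" using interior_maximal by blast
  thus False using s by auto
qed

lemma chord_near_endpoint_in_P_le:
  assumes J: "{s. chord v u s \<in> P} = {s0..s1}" and s: "s \<in> {s0, s1}" and t: "t \<in> {s0..s1}" "\<bar>t - s\<bar> \<le> 1/2"
  shows "chord v u t \<in> P_le P 2"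
proof -
  have "s0 \<le> s1" using t by simp
  have sP: "chord v u s \<in> P" using J s \<open>s0 \<le> s1\<close> by auto
  obtain \<alpha> \<beta> where "facet_pair P \<alpha> \<beta>" "\<alpha> \<bullet> chord v u s = \<beta>"
    using facet_pair_through_point[OF sP chord_endpoint_not_interior[OF J s \<open>s0 \<le> s1\<close>]] by blast
  moreover have "chord v u t \<in> P" using J t by auto
  ultimately show ?thesis
    using t(2) by (intro mem_P_le_if_near_facet[OF _ P_subset_kball])
      (auto simp: chord_in_kball[OF u vu v] hdist_chord[OF u vu v])
qed

lemma hvol_slice_chord_ends_le:
  assumes J: "{s. chord v u s \<in> P} = {s0..s1}" and "s0 \<le> s1"
  shows "hvol_slice v u (chord v u ` {s0..min (s0 + 1/2) s1}) \<le> hvol_slice v u (P_le P 2)"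
    and "hvol_slice v u (chord v u ` {max (s1 - 1/2) s0..s1}) \<le> hvol_slice v u (P_le P 2)"
  using chord_near_endpoint_in_P_le[OF J, of s0] chord_near_endpoint_in_P_le[OF J, of s1] \<open>s0 \<le> s1\<close>
  by (auto intro!: hvol_slice_mono)

end

end

lemma ennreal_le_of_le_sum:
  assumes K: "0 < K" and a: "a \<le> ennreal K * (b + c)" and "b \<le> x" "c \<le> x"
  shows "ennreal (1 / (2 * K)) * a \<le> x"
proof -
  have "ennreal (1 / (2 * K)) * a \<le> ennreal (1 / (2 * K)) * ennreal K * (x + x)"
    using a add_mono[OF assms(3,4)] by (metis mult.assoc mult_left_mono order_trans zero_le)
  also have "\<dots> = (ennreal (1 / (2 * K)) * ennreal K * 2) * x" by (simp only: mult_2 mult.assoc)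
  also have "ennreal (1 / (2 * K)) * ennreal K * 2 = 1"
    using K by (simp add: ennreal_mult[symmetric] divide_ennreal_def[symmetric] mult.commute[of "inverse 2"])
  finally show ?thesis by simp
qed

lemma (in klein_polytope) hvol_slice_P_le_ge:
  fixes v u :: "real^'n"
  assumes d: "2 \<le> CARD('n)" and u: "norm u = 1" and vu: "v \<bullet> u = 0" and fin: "hvol_slice v u P < \<infinity>"
  shows "ennreal (1 / (2 * ends_const)) * hvol_slice v u P \<le> hvol_slice v u (P_le P 2)"
proof (cases "norm v < 1")
  case False
  thus ?thesis using hvol_slice_outside[OF u vu] by simp
next
  case v: True
  obtain s0 s1 where J: "{s. chord v u s \<in> P} = {s0..s1}"
    using chord_preimage_interval[OF u vu v fin] by blast
  have P: "hvol_slice v u P = hvol_slice v u (chord v u ` {s0..s1})"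
    using hvol_slice_eq_chord_image[OF u vu P_subset_kball] J by simp
  show ?thesis
  proof (cases "s0 \<le> s1")
    case False
    thus ?thesis using P by (simp add: hvol_slice_def)
  next
    case True
    let ?A = "ennreal (1 / sqrt (1 - (norm v)\<^sup>2) ^ CARD('n))" and ?I = "cosh_pow_integral (CARD('n) - 1)"
    have "?I s0 s1 \<le> ennreal ends_const * (?I s0 (min (s0 + 1/2) s1) + ?I (max (s1 - 1/2) s0) s1)"
      using cosh_pow_integral_le_ends[of "CARD('n) - 1" s0 s1] d by simp
    hence "?A * ?I s0 s1 \<le> ?A * (ennreal ends_const * (?I s0 (min (s0 + 1/2) s1) + ?I (max (s1 - 1/2) s0) s1))"
      by (rule mult_left_mono) simp
    also have "\<dots> = ennreal ends_const * (?A * ?I s0 (min (s0 + 1/2) s1) + ?A * ?I (max (s1 - 1/2) s0) s1)"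
      by (simp add: distrib_left mult_ac)
    finally have le: "?A * ?I s0 s1 \<le> ennreal ends_const
        * (?A * ?I s0 (min (s0 + 1/2) s1) + ?A * ?I (max (s1 - 1/2) s0) s1)" .
    have ends: "?A * ?I s0 (min (s0 + 1/2) s1) \<le> hvol_slice v u (P_le P 2)"
      "?A * ?I (max (s1 - 1/2) s0) s1 \<le> hvol_slice v u (P_le P 2)"
      using hvol_slice_chord_ends_le[OF u vu v J True] True
      by (simp_all add: hvol_slice_chord_image[OF u vu v])
    show ?thesis
      unfolding P hvol_slice_chord_image[OF u vu v True]
      using ends_const(1) by (intro ennreal_le_of_le_sum[OF _ le ends]) simp
  qed
qed

section \<open>Integrating over the slices\<close>

lemma nn_integral_lborel_split_Basis:
  fixes F :: "'a::euclidean_space \<Rightarrow> ennreal" and u :: 'a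
  assumes u: "u \<in> Basis" and F[measurable]: "F \<in> borel_measurable borel"
  shows "(\<integral>\<^sup>+x. F x \<partial>lborel) =
    (\<integral>\<^sup>+g. (\<integral>\<^sup>+y. F ((\<Sum>b\<in>Basis-{u}. g b *\<^sub>R b) + y *\<^sub>R u) \<partial>lborel) \<partial>(\<Pi>\<^sub>M b\<in>Basis - {u}. lborel))"
proof -
  interpret product_sigma_finite "\<lambda>_::'a. lborel::real measure" by standard
  have Basis: "Basis = insert u (Basis - {u})" using u by auto
  have "(\<integral>\<^sup>+x. F x \<partial>lborel) = (\<integral>\<^sup>+f. F (\<Sum>b\<in>Basis. f b *\<^sub>R b) \<partial>(\<Pi>\<^sub>M b\<in>Basis. lborel))"
    by (subst lborel_eq) (simp add: nn_integral_distr)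
  also have "\<dots> = (\<integral>\<^sup>+f. F (\<Sum>b\<in>Basis. f b *\<^sub>R b) \<partial>(\<Pi>\<^sub>M b\<in>insert u (Basis - {u}). lborel))"
    using Basis by simp
  also have "\<dots> = (\<integral>\<^sup>+ g. (\<integral>\<^sup>+ y. F (\<Sum>b\<in>Basis. (g(u := y)) b *\<^sub>R b) \<partial>lborel) \<partial>(\<Pi>\<^sub>M b\<in>Basis - {u}. lborel))"
    by (rule product_nn_integral_insert) (auto simp flip: Basis)
  also have "\<dots> = (\<integral>\<^sup>+g. (\<integral>\<^sup>+y. F ((\<Sum>b\<in>Basis-{u}. g b *\<^sub>R b) + y *\<^sub>R u) \<partial>lborel) \<partial>(\<Pi>\<^sub>M b\<in>Basis - {u}. lborel))"
  proof (intro nn_integral_cong)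
    fix g :: "'a \<Rightarrow> real" and y :: real
    have "(\<Sum>b\<in>Basis. (g(u := y)) b *\<^sub>R b) = y *\<^sub>R u + (\<Sum>b\<in>Basis-{u}. (g(u := y)) b *\<^sub>R b)"
      using u by (simp add: sum.remove)
    also have "(\<Sum>b\<in>Basis-{u}. (g(u := y)) b *\<^sub>R b) = (\<Sum>b\<in>Basis-{u}. g b *\<^sub>R b)"
      by (intro sum.cong) auto
    finally show "F (\<Sum>b\<in>Basis. (g(u := y)) b *\<^sub>R b) = F ((\<Sum>b\<in>Basis-{u}. g b *\<^sub>R b) + y *\<^sub>R u)"
      by (simp add: add.commute)
  qed
  finally show ?thesis .
qed

lemma hvol_le_by_slices:
  fixes S T :: "(real^'n) set" and u :: "real^'n"
  assumes u: "u \<in> Basis" and S: "S \<in> sets borel" and T: "T \<in> sets borel" and fin: "hvol S < \<infinity>"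
    and slices: "\<And>v. v \<bullet> u = 0 \<Longrightarrow> hvol_slice v u S < \<infinity> \<Longrightarrow> ennreal c * hvol_slice v u S \<le> hvol_slice v u T"
  shows "ennreal c * hvol S \<le> hvol T"
proof -
  define M where "M = (\<Pi>\<^sub>M b\<in>Basis - {u}. (lborel :: real measure))"
  define w where "w g = (\<Sum>b\<in>Basis-{u}. g b *\<^sub>R b)" for g :: "real^'n \<Rightarrow> real"
  have wu: "w g \<bullet> u = 0" for g
    unfolding w_def inner_sum_left using u by (intro sum.neutral) (auto simp: inner_not_same_Basis)
  have hvol_slices: "hvol X = (\<integral>\<^sup>+g. hvol_slice (w g) u X \<partial>M)"
    and measurable: "(\<lambda>g. hvol_slice (w g) u X) \<in> borel_measurable M" if X: "X \<in> sets borel" for X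
  proof -
    have [measurable]: "(\<lambda>x. hvol_density x * indicator X x) \<in> borel_measurable borel" using X by measurable
    have "hvol X = (\<integral>\<^sup>+x. hvol_density x * indicator X x \<partial>lborel)" by (rule hvol_eq_nn_integral[OF X])
    also have "\<dots> = (\<integral>\<^sup>+g. (\<integral>\<^sup>+y. hvol_density (w g + y *\<^sub>R u) * indicator X (w g + y *\<^sub>R u) \<partial>lborel) \<partial>M)"
      unfolding M_def w_def by (rule nn_integral_lborel_split_Basis[OF u]) measurable
    finally show "hvol X = (\<integral>\<^sup>+g. hvol_slice (w g) u X \<partial>M)" by (simp add: hvol_slice_def)
    show "(\<lambda>g. hvol_slice (w g) u X) \<in> borel_measurable M"
      unfolding M_def w_def hvol_slice_def by measurable
  qed
  have "AE g in M. hvol_slice (w g) u S \<noteq> \<infinity>"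
    using fin by (intro nn_integral_PInf_AE measurable[OF S]) (simp add: hvol_slices[OF S])
  hence "AE g in M. ennreal c * hvol_slice (w g) u S \<le> hvol_slice (w g) u T"
    by eventually_elim (intro slices wu, simp add: top.not_eq_extremum)
  hence "(\<integral>\<^sup>+g. ennreal c * hvol_slice (w g) u S \<partial>M) \<le> (\<integral>\<^sup>+g. hvol_slice (w g) u T \<partial>M)"
    by (rule nn_integral_mono_AE)
  thus ?thesis using measurable[OF S] by (simp add: hvol_slices[OF S] hvol_slices[OF T] nn_integral_cmult)
qed

theorem theorem1:
  assumes "CARD('n) \<ge> 2"
  shows "\<exists>C::real. C > 0 \<and>
    (\<forall>P :: (real^'n) set. coxeter_polytope P \<longrightarrow>
       hvol (P_le P 2) \<ge> ennreal C * hvol P)"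
proof (intro exI[of _ "1 / (2 * ends_const)"] conjI allI impI)
  show "1 / (2 * ends_const) > 0" using ends_const(1) by simp
  fix P :: "(real^'n) set"
  assume "coxeter_polytope P"
  hence P: "hpolytope P" by (simp add: coxeter_polytope_def)
  then obtain Q where "polyhedron Q" "interior Q \<noteq> {}" "P = kball \<inter> Q"
    by (rule hpolytope_imp_polyhedron)
  then interpret klein_polytope P Q by unfold_locales
  obtain u :: "real^'n" where u: "u \<in> Basis" using nonempty_Basis by blast
  show "ennreal (1 / (2 * ends_const)) * hvol P \<le> hvol (P_le P 2)"
  proof (rule hvol_le_by_slices[OF u sets_P sets_P_le])
    show "hvol P < \<infinity>" using P by (simp add: hpolytope_def)
    fix v :: "real^'n" assume "v \<bullet> u = 0" "hvol_slice v u P < \<infinity>"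
    thus "ennreal (1 / (2 * ends_const)) * hvol_slice v u P \<le> hvol_slice v u (P_le P 2)"
      by (rule hvol_slice_P_le_ge[OF assms norm_Basis[OF u]])
  qed
qed

end
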